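(* Let $G$ be a finite group and let $H=A\oplus B$ be the algebra constructed below. Then $H$ is a semisimple associative algebra, $A$ is a central subalgebra of $H$, and $B$ is a two-sided ideal of $H$.
   Context: Let $\mathbb C[G]$ be the group algebra and $A$ its center, with basis $E_\alpha=\sum_{g\in\alpha}g$ over conjugacy classes $\alpha$. Let $M(G)=\operatorname{End}(\mathbb C[G])$ with matrix units $E_{g_1,g_2}$ with respect to the basis $G$ ($E_{g_1,g_2}(h)=\delta_{g_2,h}g_1$). Two ordered pairs $(g_1,g_2),(g'_1,g'_2)$ are conjugate if $g'_i=gg_ig^{-1}$ for some $g\in G$. For each conjugacy class $\beta$ of ordered pairs $(s_1,s_2)$ of elements with $s_1^2=s_2^2=1$ put $E_\beta=\sum_{(s',s'')\in\beta}E_{s',s''}$, and let $B\subset M(G)$ be the span of the $E_\beta$. Let $V:\mathbb C[G]\to M(G)$ be the representation $V(g)(x)=gxg^{-1}$ and $V_\alpha=V(E_\alpha)$. $H=A\oplus B$ (as vector space) carries the multiplication given by the products in $A$ and in $B$ (matrix product) and $E_\alpha E_\beta=V_\alpha E_\beta$, $E_\beta E_\alpha=E_\beta V_\alpha$, extended bilinearly. *)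

theory Defs
  imports "HOL-Algebra.Group" Complex_Main
begin

definition is_subspace ::
  "'v set \<Rightarrow> 'v \<Rightarrow> ('v \<Rightarrow> 'v \<Rightarrow> 'v) \<Rightarrow> (complex \<Rightarrow> 'v \<Rightarrow> 'v) \<Rightarrow> 'v set \<Rightarrow> bool" where
  "is_subspace S z plus_op scl I \<longleftrightarrow> I \<subseteq> S \<and> z \<in> I \<and>
     (\<forall>x\<in>I. \<forall>y\<in>I. plus_op x y \<in> I) \<and> (\<forall>c. \<forall>x\<in>I. scl c x \<in> I)"

definition is_assoc_algebra ::
  "'v set \<Rightarrow> 'v \<Rightarrow> ('v \<Rightarrow> 'v \<Rightarrow> 'v) \<Rightarrow> (complex \<Rightarrow> 'v \<Rightarrow> 'v) \<Rightarrow> ('v \<Rightarrow> 'v \<Rightarrow> 'v) \<Rightarrow> bool" where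
  "is_assoc_algebra S z plus_op scl mul \<longleftrightarrow>
     \<comment> \<open>complex vector space\<close>
     z \<in> S \<and> (\<forall>x\<in>S. \<forall>y\<in>S. plus_op x y \<in> S) \<and> (\<forall>c. \<forall>x\<in>S. scl c x \<in> S) \<and>
     (\<forall>x\<in>S. \<forall>y\<in>S. \<forall>w\<in>S. plus_op (plus_op x y) w = plus_op x (plus_op y w)) \<and>
     (\<forall>x\<in>S. \<forall>y\<in>S. plus_op x y = plus_op y x) \<and>
     (\<forall>x\<in>S. plus_op z x = x) \<and>
     (\<forall>x\<in>S. \<exists>y\<in>S. plus_op x y = z) \<and>
     (\<forall>x\<in>S. scl 1 x = x) \<and>
     (\<forall>c d. \<forall>x\<in>S. scl c (scl d x) = scl (c * d) x) \<and>
     (\<forall>c d. \<forall>x\<in>S. scl (c + d) x = plus_op (scl c x) (scl d x)) \<and>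
     (\<forall>c. \<forall>x\<in>S. \<forall>y\<in>S. scl c (plus_op x y) = plus_op (scl c x) (scl c y)) \<and>
     \<comment> \<open>bilinear, associative multiplication\<close>
     (\<forall>x\<in>S. \<forall>y\<in>S. mul x y \<in> S) \<and>
     (\<forall>x\<in>S. \<forall>y\<in>S. \<forall>w\<in>S. mul (mul x y) w = mul x (mul y w)) \<and>
     (\<forall>x\<in>S. \<forall>y\<in>S. \<forall>w\<in>S. mul (plus_op x y) w = plus_op (mul x w) (mul y w)) \<and>
     (\<forall>x\<in>S. \<forall>y\<in>S. \<forall>w\<in>S. mul x (plus_op y w) = plus_op (mul x y) (mul x w)) \<and>
     (\<forall>c. \<forall>x\<in>S. \<forall>y\<in>S. mul (scl c x) y = scl c (mul x y)) \<and>
     (\<forall>c. \<forall>x\<in>S. \<forall>y\<in>S. mul x (scl c y) = scl c (mul x y))"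

definition is_two_sided_ideal ::
  "'v set \<Rightarrow> 'v \<Rightarrow> ('v \<Rightarrow> 'v \<Rightarrow> 'v) \<Rightarrow> (complex \<Rightarrow> 'v \<Rightarrow> 'v) \<Rightarrow> ('v \<Rightarrow> 'v \<Rightarrow> 'v) \<Rightarrow> 'v set \<Rightarrow> bool" where
  "is_two_sided_ideal S z plus_op scl mul I \<longleftrightarrow> is_subspace S z plus_op scl I \<and>
     (\<forall>x\<in>S. \<forall>y\<in>I. mul x y \<in> I \<and> mul y x \<in> I)"

definition is_nilpotent_set :: "'v \<Rightarrow> ('v \<Rightarrow> 'v \<Rightarrow> 'v) \<Rightarrow> 'v set \<Rightarrow> bool" where
  "is_nilpotent_set z mul I \<longleftrightarrow>
     (\<exists>n::nat. \<forall>x\<in>I. \<forall>xs. set xs \<subseteq> I \<and> length xs = n \<longrightarrow> foldl mul x xs = z)"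

text \<open>Semisimple (Wedderburn): associative algebra without nonzero nilpotent two-sided ideals
 (i.e. with zero radical; H is finite dimensional).\<close>
definition is_semisimple_algebra ::
  "'v set \<Rightarrow> 'v \<Rightarrow> ('v \<Rightarrow> 'v \<Rightarrow> 'v) \<Rightarrow> (complex \<Rightarrow> 'v \<Rightarrow> 'v) \<Rightarrow> ('v \<Rightarrow> 'v \<Rightarrow> 'v) \<Rightarrow> bool" where
  "is_semisimple_algebra S z plus_op scl mul \<longleftrightarrow> is_assoc_algebra S z plus_op scl mul \<and>
     (\<forall>I. is_two_sided_ideal S z plus_op scl mul I \<and> is_nilpotent_set z mul I \<longrightarrow> I = {z})"

definition is_central_subalgebra ::
  "'v set \<Rightarrow> 'v \<Rightarrow> ('v \<Rightarrow> 'v \<Rightarrow> 'v) \<Rightarrow> (complex \<Rightarrow> 'v \<Rightarrow> 'v) \<Rightarrow> ('v \<Rightarrow> 'v \<Rightarrow> 'v) \<Rightarrow> 'v set \<Rightarrow> bool" where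
  "is_central_subalgebra S z plus_op scl mul C \<longleftrightarrow> is_subspace S z plus_op scl C \<and>
     (\<forall>x\<in>C. \<forall>y\<in>C. mul x y \<in> C) \<and>
     (\<forall>x\<in>C. \<forall>y\<in>S. mul x y = mul y x)"

text \<open>Elements of C[G] are coefficient functions g \<mapsto> x_g (supported on carrier G);
 elements of M(G) = End(C[G]) are matrices w.r.t. the basis G, m i j being the coefficient
 of the matrix unit E_{i,j}.\<close>

type_synonym 'g grp_elt = "'g \<Rightarrow> complex"
type_synonym 'g grp_mat = "'g \<Rightarrow> 'g \<Rightarrow> complex"

definition grp_mult :: "('g, 'm) monoid_scheme \<Rightarrow> 'g grp_elt \<Rightarrow> 'g grp_elt \<Rightarrow> 'g grp_elt" where
  "grp_mult G x y = (\<lambda>h. \<Sum>g\<in>carrier G. \<Sum>k\<in>carrier G.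
       if g \<otimes>\<^bsub>G\<^esub> k = h then x g * y k else 0)"

definition mat_mult :: "('g, 'm) monoid_scheme \<Rightarrow> 'g grp_mat \<Rightarrow> 'g grp_mat \<Rightarrow> 'g grp_mat" where
  "mat_mult G m n = (\<lambda>i j. \<Sum>k\<in>carrier G. m i k * n k j)"

definition mat_add :: "'g grp_mat \<Rightarrow> 'g grp_mat \<Rightarrow> 'g grp_mat" where
  "mat_add m n = (\<lambda>i j. m i j + n i j)"

definition conj_classes :: "('g, 'm) monoid_scheme \<Rightarrow> 'g set set" where
  "conj_classes G = {{g \<otimes>\<^bsub>G\<^esub> x \<otimes>\<^bsub>G\<^esub> inv\<^bsub>G\<^esub> g | g. g \<in> carrier G} | x. x \<in> carrier G}"

definition class_sum :: "'g set \<Rightarrow> 'g grp_elt" where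
  "class_sum \<alpha> = (\<lambda>h. if h \<in> \<alpha> then 1 else 0)"

text \<open>The center A of C[G]: the span of the class sums.\<close>
definition A_alg :: "('g, 'm) monoid_scheme \<Rightarrow> 'g grp_elt set" where
  "A_alg G = {(\<lambda>h. \<Sum>\<alpha>\<in>conj_classes G. c \<alpha> * class_sum \<alpha> h) | c. True}"

definition invols :: "('g, 'm) monoid_scheme \<Rightarrow> 'g set" where
  "invols G = {s \<in> carrier G. s \<otimes>\<^bsub>G\<^esub> s = \<one>\<^bsub>G\<^esub>}"

definition pair_classes :: "('g, 'm) monoid_scheme \<Rightarrow> ('g \<times> 'g) set set" where
  "pair_classes G = {{(g \<otimes>\<^bsub>G\<^esub> s1 \<otimes>\<^bsub>G\<^esub> inv\<^bsub>G\<^esub> g, g \<otimes>\<^bsub>G\<^esub> s2 \<otimes>\<^bsub>G\<^esub> inv\<^bsub>G\<^esub> g) | g. g \<in> carrier G}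
       | s1 s2. s1 \<in> invols G \<and> s2 \<in> invols G}"

definition pair_sum :: "('g \<times> 'g) set \<Rightarrow> 'g grp_mat" where
  "pair_sum \<beta> = (\<lambda>i j. if (i, j) \<in> \<beta> then 1 else 0)"

definition B_alg :: "('g, 'm) monoid_scheme \<Rightarrow> 'g grp_mat set" where
  "B_alg G = {(\<lambda>i j. \<Sum>\<beta>\<in>pair_classes G. c \<beta> * pair_sum \<beta> i j) | c. True}"

text \<open>The conjugation representation V(g)(x) = g x g^{-1}, extended linearly to C[G].\<close>
definition V_grp :: "('g, 'm) monoid_scheme \<Rightarrow> 'g \<Rightarrow> 'g grp_mat" where
  "V_grp G g = (\<lambda>i j. if i \<in> carrier G \<and> j \<in> carrier G \<and> i = g \<otimes>\<^bsub>G\<^esub> j \<otimes>\<^bsub>G\<^esub> inv\<^bsub>G\<^esub> g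
                       then 1 else 0)"

definition V_rep :: "('g, 'm) monoid_scheme \<Rightarrow> 'g grp_elt \<Rightarrow> 'g grp_mat" where
  "V_rep G x = (\<lambda>i j. \<Sum>g\<in>carrier G. x g * V_grp G g i j)"

type_synonym 'g H_elt = "'g grp_elt \<times> 'g grp_mat"

definition H_carrier :: "('g, 'm) monoid_scheme \<Rightarrow> 'g H_elt set" where
  "H_carrier G = A_alg G \<times> B_alg G"

definition H_zero :: "'g H_elt" where
  "H_zero = (\<lambda>_. 0, \<lambda>_ _. 0)"

definition H_add :: "'g H_elt \<Rightarrow> 'g H_elt \<Rightarrow> 'g H_elt" where
  "H_add x y = (\<lambda>h. fst x h + fst y h, mat_add (snd x) (snd y))"

definition H_smul :: "complex \<Rightarrow> 'g H_elt \<Rightarrow> 'g H_elt" where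
  "H_smul c x = (\<lambda>h. c * fst x h, \<lambda>i j. c * snd x i j)"

text \<open>(a + b)(a' + b') = a a' + (V(a) b' + b V(a') + b b').\<close>
definition H_mult :: "('g, 'm) monoid_scheme \<Rightarrow> 'g H_elt \<Rightarrow> 'g H_elt \<Rightarrow> 'g H_elt" where
  "H_mult G x y = (grp_mult G (fst x) (fst y),
     mat_add (mat_add (mat_mult G (V_rep G (fst x)) (snd y))
                      (mat_mult G (snd x) (V_rep G (fst y))))
             (mat_mult G (snd x) (snd y)))"

end

(*
  Both summands of H carry a positive involution: star x (g) = cnj (x (g^-1)) on the group
  algebra and the conjugate transpose on M(G).  They are compatible, star (V x) = V (star x), so
  star (a, b) = (star a, star b) is an anti-automorphism of H, and star z * z = 0 forces z = 0
  (look at the coefficient of 1 in star a * a and at the diagonal of star b * b).  An algebra with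
  such an involution has no nonzero nilpotent ideal: for x in such an ideal, h = star x * x is a
  self-adjoint nilpotent element, and positivity halves the nilpotency exponent of a self-adjoint
  element until h = 0, whence x = 0.

  The other two claims rest on describing A and B as spans of indicators of orbits, i.e. as the
  class functions and the conjugation-invariant matrices supported on pairs of involutions:
  class functions are central in C[G], V(a) commutes with every conjugation-invariant matrix,
  and products with V(a) preserve invariance.
*)
theory Submission
  imports Defs "HOL-Algebra.Group_Action"
begin

section \<open>Semisimplicity from a positive involution\<close>

locale positive_involution =
  fixes S :: "'v set" and z :: 'v and mul :: "'v \<Rightarrow> 'v \<Rightarrow> 'v" and star :: "'v \<Rightarrow> 'v"
  assumes mul_closed: "x \<in> S \<Longrightarrow> y \<in> S \<Longrightarrow> mul x y \<in> S"
    and mul_assoc: "x \<in> S \<Longrightarrow> y \<in> S \<Longrightarrow> w \<in> S \<Longrightarrow> mul (mul x y) w = mul x (mul y w)"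
    and mul_zero: "x \<in> S \<Longrightarrow> mul x z = z"
    and star_closed: "x \<in> S \<Longrightarrow> star x \<in> S"
    and star_star: "x \<in> S \<Longrightarrow> star (star x) = x"
    and star_mul: "x \<in> S \<Longrightarrow> y \<in> S \<Longrightarrow> star (mul x y) = mul (star y) (star x)"
    and star_mul_self_eq_zero: "x \<in> S \<Longrightarrow> mul (star x) x = z \<Longrightarrow> x = z"
begin

definition pow_succ :: "'v \<Rightarrow> nat \<Rightarrow> 'v" where
  "pow_succ h n = foldl mul h (replicate n h)"

lemma pow_succ_0 [simp]: "pow_succ h 0 = h"
  unfolding pow_succ_def by simp

lemma pow_succ_Suc: "pow_succ h (Suc n) = mul (pow_succ h n) h"
  unfolding pow_succ_def by (simp flip: replicate_append_same)

lemma pow_succ_closed: "h \<in> S \<Longrightarrow> pow_succ h n \<in> S"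
  by (induction n) (simp_all add: pow_succ_Suc mul_closed)

lemma pow_succ_add:
  assumes "h \<in> S"
  shows "mul (pow_succ h m) (pow_succ h n) = pow_succ h (Suc (m + n))"
proof (induction n)
  case (Suc n)
  have "mul (pow_succ h m) (pow_succ h (Suc n)) = mul (mul (pow_succ h m) (pow_succ h n)) h"
    using assms by (simp add: pow_succ_Suc mul_assoc pow_succ_closed)
  then show ?case by (simp add: Suc pow_succ_Suc)
qed (simp add: pow_succ_Suc)

lemma pow_succ_star:
  assumes "h \<in> S" "star h = h"
  shows "star (pow_succ h n) = pow_succ h n"
proof (induction n)
  case (Suc n)
  then have "star (pow_succ h (Suc n)) = mul h (pow_succ h n)"
    using assms by (simp add: pow_succ_Suc star_mul pow_succ_closed)
  also have "\<dots> = pow_succ h (Suc n)" using pow_succ_add[OF assms(1), of 0 n] by simp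
  finally show ?case .
qed (simp add: assms)

lemma selfadjoint_nilpotent_eq_zero:
  assumes h: "h \<in> S" "star h = h" and nil: "pow_succ h n = z"
  shows "h = z"
  using nil
proof (induction n rule: less_induct)
  case (less n)
  show ?case
  proof (cases "n = 0")
    case True
    then show ?thesis using less.prems by simp
  next
    case False
    \<comment> \<open>With p = n div 2 < n we have 2p + 1 \<ge> n, so the power 2p + 2 of h vanishes,
      and it is star (h^(p+1)) * h^(p+1); positivity halves the exponent.\<close>
    define p where "p = n div 2"
    have "pow_succ h (Suc (p + p)) = z"
    proof (cases "Suc (p + p) = n")
      case False
      then have "Suc (p + p) = Suc (p + p - n + n)" unfolding p_def by simp
      then have "pow_succ h (Suc (p + p)) = mul (pow_succ h (p + p - n)) (pow_succ h n)"
        using h by (simp only: pow_succ_add)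
      then show ?thesis using less.prems mul_zero pow_succ_closed h by simp
    qed (use less.prems in simp)
    then have "mul (star (pow_succ h p)) (pow_succ h p) = z"
      using pow_succ_star[OF h] pow_succ_add[OF h(1), of p p] by simp
    then have "pow_succ h p = z" using star_mul_self_eq_zero pow_succ_closed h by blast
    moreover have "p < n" using False unfolding p_def by simp
    ultimately show ?thesis by (intro less.IH)
  qed
qed

lemma nilpotent_ideal_eq_zero:
  assumes ideal: "is_two_sided_ideal S z pl scl mul I" and nilpotent: "is_nilpotent_set z mul I"
  shows "I = {z}"
proof -
  have IS: "I \<subseteq> S" and zI: "z \<in> I"
    and absorb: "\<And>x y. x \<in> S \<Longrightarrow> y \<in> I \<Longrightarrow> mul x y \<in> I"
    using ideal unfolding is_two_sided_ideal_def is_subspace_def by auto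
  obtain n
    where n: "\<And>x xs. x \<in> I \<Longrightarrow> set xs \<subseteq> I \<Longrightarrow> length xs = n \<Longrightarrow> foldl mul x xs = z"
    using nilpotent unfolding is_nilpotent_set_def by blast
  have "x = z" if x: "x \<in> I" for x
  proof -
    have xS: "x \<in> S" using x IS by auto
    define h where "h = mul (star x) x"
    have hI: "h \<in> I" unfolding h_def using absorb star_closed xS x by auto
    have "star h = h" unfolding h_def using star_mul star_closed star_star xS by simp
    moreover have "pow_succ h n = z"
      using n[of h "replicate n h"] hI by (simp add: pow_succ_def set_replicate_conv_if)
    ultimately have "h = z" using selfadjoint_nilpotent_eq_zero[of h n] hI IS by blast
    then show "x = z" using star_mul_self_eq_zero xS unfolding h_def by blast
  qed
  then show "I = {z}" using zI by blast
qed

end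

lemma semisimple_if_positive_involution:
  assumes "is_assoc_algebra S z pl scl mul" "positive_involution S z mul star"
  shows "is_semisimple_algebra S z pl scl mul"
  unfolding is_semisimple_algebra_def
  using assms(1) positive_involution.nilpotent_ideal_eq_zero[OF assms(2)] by blast

section \<open>Functions constant on orbits\<close>

lemma group_actionI:
  fixes G (structure)
  assumes "group G"
    and closed: "\<And>g x. g \<in> carrier G \<Longrightarrow> x \<in> E \<Longrightarrow> act g x \<in> E"
    and one: "\<And>x. x \<in> E \<Longrightarrow> act \<one>\<^bsub>G\<^esub> x = x"
    and mult: "\<And>g h x. g \<in> carrier G \<Longrightarrow> h \<in> carrier G \<Longrightarrow> x \<in> E \<Longrightarrow>
                 act (g \<otimes>\<^bsub>G\<^esub> h) x = act g (act h x)"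
  shows "group_action G E (\<lambda>g. restrict (act g) E)"
proof -
  interpret group G by fact
  have bij: "restrict (act g) E \<in> Bij E" if g: "g \<in> carrier G" for g
  proof -
    have "bij_betw (act g) E E"
      by (rule bij_betw_byWitness[where f' = "act (inv g)"])
         (use g closed one mult in \<open>auto simp flip: mult\<close>)
    then show ?thesis unfolding Bij_def by (simp add: bij_betw_restrict_eq)
  qed
  have "restrict (act (g \<otimes> h)) E = compose E (restrict (act g) E) (restrict (act h) E)"
    if "g \<in> carrier G" "h \<in> carrier G" for g h
    using that closed mult by (auto simp: compose_def)
  then have "(\<lambda>g. restrict (act g) E) \<in> hom G (BijGroup E)"
    using bij by (intro homI) (auto simp: BijGroup_def)
  then show ?thesis
    unfolding group_action_def group_hom_def group_hom_axioms_def
    using group_BijGroup is_group by blast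
qed

lemma (in group_action) in_orbits_iff:
  assumes "orb \<in> orbits G E \<phi>" "x \<in> E"
  shows "x \<in> orb \<longleftrightarrow> orb = orbit G \<phi> x"
proof -
  have "orbit G \<phi> x \<in> orbits G E \<phi>" "x \<in> orbit G \<phi> x"
    using assms(2) orbit_refl unfolding orbits_def by auto
  then show ?thesis
    using partition.unique_class[OF orbit_partition assms(2)] assms(1) by blast
qed

lemma (in group_action) finite_orbits: "finite E \<Longrightarrow> finite (orbits G E \<phi>)"
  using partition.incl[OF orbit_partition] by (meson Pow_iff finite_Pow_iff finite_subset subsetI)

lemma (in group_action) orbit_apply:
  assumes "g \<in> carrier G" "x \<in> E"
  shows "orbit G \<phi> (\<phi> g x) = orbit G \<phi> x"
proof -
  have "\<phi> g x \<in> orbit G \<phi> x" "\<phi> g x \<in> E" "orbit G \<phi> x \<in> orbits G E \<phi>"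
    using assms element_image unfolding orbit_def orbits_def by auto
  then show ?thesis using in_orbits_iff by blast
qed

lemma (in group_action) sum_orbit_indicators:
  assumes "finite E"
  shows "(\<Sum>orb\<in>orbits G E \<phi>. c orb * (if x \<in> orb then 1 else 0 :: 'r::comm_ring_1)) =
    (if x \<in> E then c (orbit G \<phi> x) else 0)"
proof (cases "x \<in> E")
  case True
  then have "orbit G \<phi> x \<in> orbits G E \<phi>" unfolding orbits_def by blast
  then show ?thesis
    using True in_orbits_iff[OF _ True] finite_orbits[OF assms]
    by (simp add: if_distrib cong: if_cong)
next
  case False
  then have "x \<notin> orb" if "orb \<in> orbits G E \<phi>" for orb
    using that partition.incl[OF orbit_partition] by blast
  then show ?thesis using False by (simp add: sum.neutral)
qed

lemma (in group_action) span_orbit_indicators: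
  assumes "finite E"
  shows "{(\<lambda>x. \<Sum>orb\<in>orbits G E \<phi>. c orb * (if x \<in> orb then 1 else 0 :: 'r::comm_ring_1))
      | c. True} =
    {f. (\<forall>x. x \<notin> E \<longrightarrow> f x = 0) \<and> (\<forall>g\<in>carrier G. \<forall>x\<in>E. f (\<phi> g x) = f x)}"
    (is "?span = ?inv")
proof (intro Set.set_eqI iffI)
  fix f assume "f \<in> ?span"
  then obtain c where "f = (\<lambda>x. if x \<in> E then c (orbit G \<phi> x) else 0)"
    by (auto simp: sum_orbit_indicators[OF assms])
  then show "f \<in> ?inv" using orbit_apply element_image by auto
next
  fix f assume f: "f \<in> ?inv"
  have "f x = (if x \<in> E then f (SOME y. y \<in> orbit G \<phi> x) else 0)" for x
  proof (cases "x \<in> E")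
    case True
    have "(SOME y. y \<in> orbit G \<phi> x) \<in> orbit G \<phi> x"
      using orbit_refl[OF True] by (rule someI)
    then show ?thesis using f True unfolding orbit_def by auto
  qed (use f in simp)
  then show "f \<in> ?span"
    by (auto simp: sum_orbit_indicators[OF assms] intro!: exI[of _ "\<lambda>orb. f (SOME y. y \<in> orb)"])
qed

lemma mat_mult_assoc: "mat_mult G (mat_mult G m n) p = mat_mult G m (mat_mult G n p)"
  unfolding mat_mult_def
  by (intro ext) (simp add: sum_distrib_left sum_distrib_right mult.assoc, rule sum.swap)

lemma mat_mult_add_left: "mat_mult G (mat_add m n) p = mat_add (mat_mult G m p) (mat_mult G n p)"
  unfolding mat_mult_def mat_add_def by (intro ext) (simp add: distrib_right sum.distrib)

lemma mat_mult_add_right: "mat_mult G p (mat_add m n) = mat_add (mat_mult G p m) (mat_mult G p n)"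
  unfolding mat_mult_def mat_add_def by (intro ext) (simp add: distrib_left sum.distrib)

lemma mat_mult_zero [simp]:
  "mat_mult G (\<lambda>_ _. 0) m = (\<lambda>_ _. 0)" "mat_mult G m (\<lambda>_ _. 0) = (\<lambda>_ _. 0)"
  unfolding mat_mult_def by simp_all

lemma mat_add_zero [simp]: "mat_add (\<lambda>_ _. 0) m = m" "mat_add m (\<lambda>_ _. 0) = m"
  unfolding mat_add_def by simp_all

lemma mat_mult_scale_left: "mat_mult G (\<lambda>i j. c * m i j) n = (\<lambda>i j. c * mat_mult G m n i j)"
  unfolding mat_mult_def by (intro ext) (simp add: sum_distrib_left mult.assoc)

lemma mat_mult_scale_right: "mat_mult G m (\<lambda>i j. c * n i j) = (\<lambda>i j. c * mat_mult G m n i j)"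
  unfolding mat_mult_def by (intro ext) (simp add: sum_distrib_left mult_ac)

lemma mat_mult_nonzero:
  assumes "mat_mult G m n i j \<noteq> 0"
  obtains k where "m i k \<noteq> 0" "n k j \<noteq> 0"
  using assms unfolding mat_mult_def
  by (metis (no_types, lifting) mult_not_zero sum.not_neutral_contains_not_neutral)

lemma V_rep_add: "V_rep G (\<lambda>h. x h + y h) = mat_add (V_rep G x) (V_rep G y)"
  unfolding V_rep_def mat_add_def by (intro ext) (simp add: distrib_right sum.distrib)

lemma V_rep_scale: "V_rep G (\<lambda>h. c * x h) = (\<lambda>i j. c * V_rep G x i j)"
  unfolding V_rep_def by (intro ext) (simp add: sum_distrib_left mult.assoc)

lemma V_rep_zero [simp]: "V_rep G (\<lambda>_. 0) = (\<lambda>_ _. 0)"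
  unfolding V_rep_def by simp

lemma mat_mult_V_rep_left:
  "mat_mult G (V_rep G x) m i j = (\<Sum>g\<in>carrier G. x g * mat_mult G (V_grp G g) m i j)"
  unfolding mat_mult_def V_rep_def sum_distrib_left sum_distrib_right
  by (subst sum.swap) (simp add: mult.assoc)

lemma mat_mult_V_rep_right:
  "mat_mult G m (V_rep G x) i j = (\<Sum>g\<in>carrier G. x g * mat_mult G m (V_grp G g) i j)"
  unfolding mat_mult_def V_rep_def sum_distrib_left
  by (subst sum.swap) (simp add: mult_ac)

section \<open>Conjugation in a finite group\<close>

lemma (in group) inv_mult_cancel_left [simp]:
  "g \<in> carrier G \<Longrightarrow> x \<in> carrier G \<Longrightarrow> inv g \<otimes> (g \<otimes> x) = x"
  "g \<in> carrier G \<Longrightarrow> x \<in> carrier G \<Longrightarrow> g \<otimes> (inv g \<otimes> x) = x"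
  by (simp_all flip: m_assoc)

locale finite_group = group G for G :: "('g, 'm) monoid_scheme" (structure) +
  assumes finite_carrier: "finite (carrier G)"
begin

definition conjugate :: "'g \<Rightarrow> 'g \<Rightarrow> 'g" where
  "conjugate g x = g \<otimes> x \<otimes> inv g"

lemma conjugate_closed [simp]:
  "g \<in> carrier G \<Longrightarrow> x \<in> carrier G \<Longrightarrow> conjugate g x \<in> carrier G"
  by (simp add: conjugate_def)

lemma conjugate_conjugate:
  "g \<in> carrier G \<Longrightarrow> k \<in> carrier G \<Longrightarrow> x \<in> carrier G \<Longrightarrow>
    conjugate g (conjugate k x) = conjugate (g \<otimes> k) x"
  by (simp add: conjugate_def inv_mult_group m_assoc)

lemma conjugate_one [simp]: "x \<in> carrier G \<Longrightarrow> conjugate \<one> x = x"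
  by (simp add: conjugate_def)

lemma conjugate_of_one [simp]: "g \<in> carrier G \<Longrightarrow> conjugate g \<one> = \<one>"
  by (simp add: conjugate_def)

lemma conjugate_inv_conjugate [simp]:
  "g \<in> carrier G \<Longrightarrow> x \<in> carrier G \<Longrightarrow> conjugate (inv g) (conjugate g x) = x"
  "g \<in> carrier G \<Longrightarrow> x \<in> carrier G \<Longrightarrow> conjugate g (conjugate (inv g) x) = x"
  by (simp_all add: conjugate_conjugate)

lemma conjugate_mult:
  "g \<in> carrier G \<Longrightarrow> x \<in> carrier G \<Longrightarrow> y \<in> carrier G \<Longrightarrow>
    conjugate g (x \<otimes> y) = conjugate g x \<otimes> conjugate g y"
  by (simp add: conjugate_def m_assoc flip: m_assoc[of "inv g" g])

lemma conjugate_inv: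
  "g \<in> carrier G \<Longrightarrow> x \<in> carrier G \<Longrightarrow> conjugate g (inv x) = inv (conjugate g x)"
  by (simp add: conjugate_def inv_mult_group m_assoc)

lemma conjugate_eq_iff:
  "g \<in> carrier G \<Longrightarrow> x \<in> carrier G \<Longrightarrow> y \<in> carrier G \<Longrightarrow>
    x = conjugate g y \<longleftrightarrow> y = conjugate (inv g) x"
  by (metis conjugate_inv_conjugate inv_closed)

lemma conjugate_in_invols_iff:
  assumes "g \<in> carrier G" "x \<in> carrier G"
  shows "conjugate g x \<in> invols G \<longleftrightarrow> x \<in> invols G"
proof -
  have "conjugate g x \<otimes> conjugate g x = conjugate g (x \<otimes> x)"
    using assms by (simp add: conjugate_mult)
  moreover have "conjugate g (x \<otimes> x) = \<one> \<longleftrightarrow> x \<otimes> x = \<one>"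
    using assms by (metis conjugate_inv_conjugate conjugate_of_one m_closed one_closed)
  ultimately show ?thesis using assms unfolding invols_def by auto
qed

lemma invols_subset: "invols G \<subseteq> carrier G"
  unfolding invols_def by auto

lemma sum_reindex_conjugate:
  "g \<in> carrier G \<Longrightarrow> (\<Sum>x\<in>carrier G. f (conjugate g x)) = sum f (carrier G)"
  by (rule sum.reindex_bij_betw, rule bij_betw_byWitness[where f' = "conjugate (inv g)"]) auto

lemma sum_reindex_mult_left:
  "g \<in> carrier G \<Longrightarrow> (\<Sum>x\<in>carrier G. f (g \<otimes> x)) = sum f (carrier G)"
  by (rule sum.reindex_bij_betw, rule bij_betw_byWitness[where f' = "\<lambda>x. inv g \<otimes> x"])
     (auto simp flip: m_assoc)

lemma sum_reindex_inv: "(\<Sum>x\<in>carrier G. f (inv x)) = sum f (carrier G)"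
  by (rule sum.reindex_bij_betw, rule bij_betw_byWitness[where f' = "\<lambda>x. inv x"]) auto

lemma conj_classes_eq_orbits:
  "conj_classes G = orbits G (carrier G) (\<lambda>g. restrict (conjugate g) (carrier G))"
  unfolding conj_classes_def orbits_def orbit_def conjugate_def by auto

lemma group_action_conjugate:
  "group_action G (carrier G) (\<lambda>g. restrict (conjugate g) (carrier G))"
  using action_by_conjugation unfolding conjugate_def .

definition pair_conjugate :: "'g \<Rightarrow> 'g \<times> 'g \<Rightarrow> 'g \<times> 'g" where
  "pair_conjugate g p = (conjugate g (fst p), conjugate g (snd p))"

lemma group_action_pair_conjugate:
  "group_action G (invols G \<times> invols G) (\<lambda>g. restrict (pair_conjugate g) (invols G \<times> invols G))"
  using invols_subset
  by (intro group_actionI)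
     (auto simp: is_group pair_conjugate_def conjugate_in_invols_iff conjugate_conjugate)

lemma pair_classes_eq_orbits:
  "pair_classes G =
    orbits G (invols G \<times> invols G) (\<lambda>g. restrict (pair_conjugate g) (invols G \<times> invols G))"
  unfolding pair_classes_def orbits_def orbit_def pair_conjugate_def conjugate_def by auto

definition class_function :: "'g grp_elt \<Rightarrow> bool" where
  "class_function x \<longleftrightarrow> (\<forall>h. h \<notin> carrier G \<longrightarrow> x h = 0) \<and>
     (\<forall>g\<in>carrier G. \<forall>h\<in>carrier G. x (conjugate g h) = x h)"

definition invariant_matrix :: "'g grp_mat \<Rightarrow> bool" where
  "invariant_matrix m \<longleftrightarrow> (\<forall>i j. m i j \<noteq> 0 \<longrightarrow> i \<in> invols G \<and> j \<in> invols G) \<and>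
     (\<forall>g\<in>carrier G. \<forall>i\<in>carrier G. \<forall>j\<in>carrier G. m (conjugate g i) (conjugate g j) = m i j)"

lemma A_alg_eq_class_functions: "A_alg G = {x. class_function x}"
proof -
  have "A_alg G = {f. (\<forall>x. x \<notin> carrier G \<longrightarrow> f x = 0) \<and>
      (\<forall>g\<in>carrier G. \<forall>x\<in>carrier G. f (restrict (conjugate g) (carrier G) x) = f x)}"
    unfolding A_alg_def class_sum_def conj_classes_eq_orbits
    by (rule group_action.span_orbit_indicators[OF group_action_conjugate finite_carrier])
  then show ?thesis unfolding class_function_def by auto
qed

lemma invariant_matrix_iff_pair_invariant:
  "invariant_matrix m \<longleftrightarrow>
    (\<forall>p. p \<notin> invols G \<times> invols G \<longrightarrow> case_prod m p = 0) \<and>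
    (\<forall>g\<in>carrier G. \<forall>p\<in>invols G \<times> invols G. case_prod m (pair_conjugate g p) = case_prod m p)"
proof -
  have support: "(\<forall>p. p \<notin> invols G \<times> invols G \<longrightarrow> case_prod m p = 0) \<longleftrightarrow>
      (\<forall>i j. m i j \<noteq> 0 \<longrightarrow> i \<in> invols G \<and> j \<in> invols G)"
    by auto
  have "m (conjugate g i) (conjugate g j) = m i j"
    if zero: "\<forall>i j. m i j \<noteq> 0 \<longrightarrow> i \<in> invols G \<and> j \<in> invols G"
      and invariant: "\<forall>g\<in>carrier G. \<forall>p\<in>invols G \<times> invols G.
        case_prod m (pair_conjugate g p) = case_prod m p"
      and gij: "g \<in> carrier G" "i \<in> carrier G" "j \<in> carrier G" for g i j
  proof (cases "i \<in> invols G \<and> j \<in> invols G")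
    case True
    then show ?thesis using invariant gij(1) by (auto simp: pair_conjugate_def)
  next
    case False
    then show ?thesis using zero gij conjugate_in_invols_iff by metis
  qed
  then show ?thesis
    unfolding invariant_matrix_def support using invols_subset
    by (auto simp: pair_conjugate_def subset_iff)
qed

lemma B_alg_eq_invariant_matrices: "B_alg G = {m. invariant_matrix m}"
proof -
  let ?E = "invols G \<times> invols G"
  have "finite ?E" using finite_carrier invols_subset by (meson finite_SigmaI finite_subset)
  then have span:
    "{(\<lambda>p. \<Sum>\<beta>\<in>pair_classes G. c \<beta> * (if p \<in> \<beta> then 1 else 0 :: complex)) | c. True} =
      {f. (\<forall>p. p \<notin> ?E \<longrightarrow> f p = 0) \<and>
        (\<forall>g\<in>carrier G. \<forall>p\<in>?E. f (restrict (pair_conjugate g) ?E p) = f p)}"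
    unfolding pair_classes_eq_orbits
    by (rule group_action.span_orbit_indicators[OF group_action_pair_conjugate])
  have "m \<in> B_alg G \<longleftrightarrow>
      case_prod m \<in>
        {(\<lambda>p. \<Sum>\<beta>\<in>pair_classes G. c \<beta> * (if p \<in> \<beta> then 1 else 0)) | c. True}"
    for m
    unfolding B_alg_def pair_sum_def by (auto simp: fun_eq_iff)
  then show ?thesis
    unfolding span invariant_matrix_iff_pair_invariant by auto
qed

end

context finite_group
begin

lemma sum_if_unique:
  assumes "a \<in> carrier G" "\<And>k. k \<in> carrier G \<Longrightarrow> P k \<longleftrightarrow> k = a"
  shows "(\<Sum>k\<in>carrier G. if P k then f k else 0) = f a"
proof -
  have "(\<Sum>k\<in>carrier G. if P k then f k else 0) = (\<Sum>k\<in>carrier G. if a = k then f k else 0)"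
    using assms(2) by (intro sum.cong) auto
  also have "\<dots> = f a" using finite_carrier assms(1) by simp
  finally show ?thesis .
qed

lemma grp_mult_apply:
  assumes "h \<in> carrier G"
  shows "grp_mult G x y h = (\<Sum>g\<in>carrier G. x g * y (inv g \<otimes> h))"
  unfolding grp_mult_def
proof (rule sum.cong[OF refl])
  fix g assume g: "g \<in> carrier G"
  show "(\<Sum>k\<in>carrier G. if g \<otimes> k = h then x g * y k else 0) = x g * y (inv g \<otimes> h)"
    using g assms by (intro sum_if_unique) (auto simp: inv_solve_left)
qed

lemma grp_mult_outside: "h \<notin> carrier G \<Longrightarrow> grp_mult G x y h = 0"
  unfolding grp_mult_def by (intro sum.neutral ballI) auto

lemma grp_mult_eqI:
  assumes "\<And>h. h \<in> carrier G \<Longrightarrow> (\<Sum>g\<in>carrier G. x g * y (inv g \<otimes> h)) = z h"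
    and "\<And>h. h \<notin> carrier G \<Longrightarrow> z h = 0"
  shows "grp_mult G x y = z"
proof
  fix h show "grp_mult G x y h = z h"
    by (cases "h \<in> carrier G") (simp_all add: assms grp_mult_apply grp_mult_outside)
qed

lemma grp_mult_zero [simp]:
  "grp_mult G (\<lambda>_. 0) x = (\<lambda>_. 0)" "grp_mult G x (\<lambda>_. 0) = (\<lambda>_. 0)"
  by (auto intro: grp_mult_eqI)

lemma grp_mult_add_left:
  "grp_mult G (\<lambda>h. x h + y h) z = (\<lambda>h. grp_mult G x z h + grp_mult G y z h)"
  by (rule grp_mult_eqI) (simp_all add: grp_mult_apply grp_mult_outside distrib_right sum.distrib)

lemma grp_mult_add_right:
  "grp_mult G z (\<lambda>h. x h + y h) = (\<lambda>h. grp_mult G z x h + grp_mult G z y h)"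
  by (rule grp_mult_eqI) (simp_all add: grp_mult_apply grp_mult_outside distrib_left sum.distrib)

lemma grp_mult_scale_left: "grp_mult G (\<lambda>h. c * x h) y = (\<lambda>h. c * grp_mult G x y h)"
  by (rule grp_mult_eqI) (simp_all add: grp_mult_apply grp_mult_outside sum_distrib_left mult.assoc)

lemma grp_mult_scale_right: "grp_mult G x (\<lambda>h. c * y h) = (\<lambda>h. c * grp_mult G x y h)"
  by (rule grp_mult_eqI) (simp_all add: grp_mult_apply grp_mult_outside sum_distrib_left mult_ac)

lemma grp_mult_assoc: "grp_mult G (grp_mult G x y) z = grp_mult G x (grp_mult G y z)"
proof (rule grp_mult_eqI)
  fix h assume h: "h \<in> carrier G"
  have "(\<Sum>g\<in>carrier G. grp_mult G x y g * z (inv g \<otimes> h)) =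
      (\<Sum>k\<in>carrier G. \<Sum>g\<in>carrier G. x k * y (inv k \<otimes> g) * z (inv g \<otimes> h))"
    by (simp add: grp_mult_apply sum_distrib_right, rule sum.swap)
  also have "\<dots> = (\<Sum>k\<in>carrier G. \<Sum>g\<in>carrier G.
      x k * y (inv k \<otimes> (k \<otimes> g)) * z (inv (k \<otimes> g) \<otimes> h))"
    by (intro sum.cong refl sum_reindex_mult_left[symmetric])
  also have "\<dots> = (\<Sum>k\<in>carrier G. x k * grp_mult G y z (inv k \<otimes> h))"
    using h by (intro sum.cong refl)
       (simp add: grp_mult_apply sum_distrib_left inv_mult_group m_assoc mult.assoc)
  finally show "(\<Sum>g\<in>carrier G. grp_mult G x y g * z (inv g \<otimes> h)) =
      grp_mult G x (grp_mult G y z) h"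
    using h by (simp add: grp_mult_apply)
qed (simp add: grp_mult_outside)

lemma class_function_zero: "class_function (\<lambda>_. 0)"
  unfolding class_function_def by simp

lemma class_function_add:
  "class_function x \<Longrightarrow> class_function y \<Longrightarrow> class_function (\<lambda>h. x h + y h)"
  unfolding class_function_def by simp

lemma class_function_scale: "class_function x \<Longrightarrow> class_function (\<lambda>h. c * x h)"
  unfolding class_function_def by simp

lemma class_function_grp_mult:
  assumes "class_function x" "class_function y"
  shows "class_function (grp_mult G x y)"
proof -
  have "grp_mult G x y (conjugate a h) = grp_mult G x y h"
    if a: "a \<in> carrier G" and h: "h \<in> carrier G" for a h
  proof -
    have "grp_mult G x y (conjugate a h) =
        (\<Sum>g\<in>carrier G. x (conjugate a g) * y (inv (conjugate a g) \<otimes> conjugate a h))"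
      using a h sum_reindex_conjugate[OF a, of "\<lambda>g. x g * y (inv g \<otimes> conjugate a h)"]
      by (simp add: grp_mult_apply)
    also have "\<dots> = (\<Sum>g\<in>carrier G. x g * y (inv g \<otimes> h))"
      using a h assms unfolding class_function_def
      by (intro sum.cong) (simp_all flip: conjugate_inv conjugate_mult)
    finally show ?thesis using h by (simp add: grp_mult_apply)
  qed
  then show ?thesis unfolding class_function_def by (simp add: grp_mult_outside)
qed

lemma class_function_commute:
  assumes "class_function x"
  shows "grp_mult G x y = grp_mult G y x"
proof (rule grp_mult_eqI)
  fix h assume h: "h \<in> carrier G"
  have "(\<Sum>g\<in>carrier G. x g * y (inv g \<otimes> h)) =
      (\<Sum>g\<in>carrier G. x (h \<otimes> inv g) * y g)"
    using h by (subst sum_reindex_mult_left[OF h, symmetric], subst sum_reindex_inv[symmetric])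
      (intro sum.cong, simp_all add: inv_mult_group m_assoc)
  also have "\<dots> = (\<Sum>g\<in>carrier G. y g * x (inv g \<otimes> h))"
  proof (intro sum.cong refl)
    fix g assume g: "g \<in> carrier G"
    have "conjugate (inv g) (h \<otimes> inv g) = inv g \<otimes> h"
      using g h by (simp add: conjugate_def m_assoc)
    then show "x (h \<otimes> inv g) * y g = y g * x (inv g \<otimes> h)"
      using assms g h unfolding class_function_def by (metis inv_closed m_closed mult.commute)
  qed
  finally show "(\<Sum>g\<in>carrier G. x g * y (inv g \<otimes> h)) = grp_mult G y x h"
    using h by (simp add: grp_mult_apply)
qed (simp add: grp_mult_outside)

end

context finite_group
begin

lemma V_grp_eq:
  "V_grp G g i j = (if i \<in> carrier G \<and> j \<in> carrier G \<and> i = conjugate g j then 1 else 0)"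
  unfolding V_grp_def conjugate_def ..

lemma mat_mult_V_grp_left:
  assumes "g \<in> carrier G"
  shows "mat_mult G (V_grp G g) m i j = (if i \<in> carrier G then m (conjugate (inv g) i) j else 0)"
proof (cases "i \<in> carrier G")
  case True
  have "mat_mult G (V_grp G g) m i j = (\<Sum>k\<in>carrier G. if i = conjugate g k then m k j else 0)"
    unfolding mat_mult_def V_grp_eq using True by (intro sum.cong) auto
  also have "\<dots> = m (conjugate (inv g) i) j"
    using assms True conjugate_eq_iff[OF assms True] by (intro sum_if_unique) auto
  finally show ?thesis using True by simp
qed (simp add: mat_mult_def V_grp_eq)

lemma mat_mult_V_grp_right:
  assumes "g \<in> carrier G"
  shows "mat_mult G m (V_grp G g) i j = (if j \<in> carrier G then m i (conjugate g j) else 0)"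
proof (cases "j \<in> carrier G")
  case True
  have "mat_mult G m (V_grp G g) i j = (\<Sum>k\<in>carrier G. if k = conjugate g j then m i k else 0)"
    unfolding mat_mult_def V_grp_eq using True by (intro sum.cong) auto
  also have "\<dots> = m i (conjugate g j)"
    using assms True by (intro sum_if_unique) auto
  finally show ?thesis using True by simp
qed (simp add: mat_mult_def V_grp_eq)

lemma V_grp_mult:
  assumes "g \<in> carrier G" "h \<in> carrier G"
  shows "V_grp G (g \<otimes> h) = mat_mult G (V_grp G g) (V_grp G h)"
proof (intro ext)
  fix i j
  have "conjugate (inv g) i = conjugate h j \<longleftrightarrow> i = conjugate (g \<otimes> h) j"
    if "i \<in> carrier G" "j \<in> carrier G"
    using assms that by (metis conjugate_closed conjugate_conjugate conjugate_eq_iff inv_closed)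
  then show "V_grp G (g \<otimes> h) i j = mat_mult G (V_grp G g) (V_grp G h) i j"
    using assms by (auto simp: mat_mult_V_grp_left V_grp_eq)
qed

lemma V_rep_grp_mult: "V_rep G (grp_mult G x y) = mat_mult G (V_rep G x) (V_rep G y)"
proof (intro ext)
  fix i j
  have "V_rep G (grp_mult G x y) i j =
      (\<Sum>k\<in>carrier G. \<Sum>g\<in>carrier G. \<Sum>h\<in>carrier G.
         if g \<otimes> h = k then x g * y h * V_grp G k i j else 0)"
    unfolding V_rep_def grp_mult_def sum_distrib_right
    by (intro sum.cong refl) (simp add: if_distrib)
  also have "\<dots> = (\<Sum>g\<in>carrier G. \<Sum>h\<in>carrier G. \<Sum>k\<in>carrier G.
         if g \<otimes> h = k then x g * y h * V_grp G k i j else 0)"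
    by (subst sum.swap) (intro sum.cong refl sum.swap)
  also have "\<dots> = (\<Sum>g\<in>carrier G. \<Sum>h\<in>carrier G. x g * y h * V_grp G (g \<otimes> h) i j)"
    using finite_carrier by (intro sum.cong refl) simp
  also have "\<dots> = (\<Sum>g\<in>carrier G. x g *
      (\<Sum>h\<in>carrier G. y h * mat_mult G (V_grp G g) (V_grp G h) i j))"
    by (intro sum.cong refl) (simp add: V_grp_mult sum_distrib_left mult.assoc)
  also have "\<dots> = mat_mult G (V_rep G x) (V_rep G y) i j"
    unfolding mat_mult_V_rep_left by (simp add: mat_mult_V_rep_right)
  finally show "V_rep G (grp_mult G x y) i j = mat_mult G (V_rep G x) (V_rep G y) i j" .
qed

lemma mat_mult_V_rep_left_eq:
  "mat_mult G (V_rep G x) m i j =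
    (if i \<in> carrier G then \<Sum>g\<in>carrier G. x g * m (conjugate (inv g) i) j else 0)"
  by (simp add: mat_mult_V_rep_left mat_mult_V_grp_left cong: sum.cong)

lemma mat_mult_V_rep_right_eq:
  "mat_mult G m (V_rep G x) i j =
    (if j \<in> carrier G then \<Sum>g\<in>carrier G. x g * m i (conjugate g j) else 0)"
  by (simp add: mat_mult_V_rep_right mat_mult_V_grp_right cong: sum.cong)

lemma invariant_matrix_zero: "invariant_matrix (\<lambda>_ _. 0)"
  unfolding invariant_matrix_def by simp

lemma invariant_matrix_add:
  "invariant_matrix m \<Longrightarrow> invariant_matrix n \<Longrightarrow> invariant_matrix (mat_add m n)"
  unfolding invariant_matrix_def mat_add_def by (metis add.right_neutral)

lemma invariant_matrix_scale: "invariant_matrix m \<Longrightarrow> invariant_matrix (\<lambda>i j. c * m i j)"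
  unfolding invariant_matrix_def by auto

lemma invariant_matrix_support:
  "invariant_matrix m \<Longrightarrow> m i j \<noteq> 0 \<Longrightarrow> i \<in> invols G \<and> j \<in> invols G"
  unfolding invariant_matrix_def by blast

lemma invariant_matrix_conjugate:
  "invariant_matrix m \<Longrightarrow> g \<in> carrier G \<Longrightarrow> i \<in> carrier G \<Longrightarrow> j \<in> carrier G \<Longrightarrow>
    m (conjugate g i) (conjugate g j) = m i j"
  unfolding invariant_matrix_def by blast

lemma invariant_matrix_mult:
  assumes "invariant_matrix m" "invariant_matrix n"
  shows "invariant_matrix (mat_mult G m n)"
proof -
  have "i \<in> invols G \<and> j \<in> invols G" if "mat_mult G m n i j \<noteq> 0" for i j
    using that by (rule mat_mult_nonzero) (use invariant_matrix_support assms in blast)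
  moreover have "mat_mult G m n (conjugate g i) (conjugate g j) = mat_mult G m n i j"
    if "g \<in> carrier G" "i \<in> carrier G" "j \<in> carrier G" for g i j
  proof -
    have "mat_mult G m n (conjugate g i) (conjugate g j) =
        (\<Sum>k\<in>carrier G. m (conjugate g i) (conjugate g k) * n (conjugate g k) (conjugate g j))"
      unfolding mat_mult_def using that
      by (simp add: sum_reindex_conjugate[where f = "\<lambda>k. m (conjugate g i) k * n k (conjugate g j)"])
    also have "\<dots> = mat_mult G m n i j"
      unfolding mat_mult_def
      using that invariant_matrix_conjugate[OF assms(1)] invariant_matrix_conjugate[OF assms(2)]
      by (intro sum.cong) auto
    finally show ?thesis .
  qed
  ultimately show ?thesis unfolding invariant_matrix_def by blast
qed

lemma V_rep_commute:
  assumes "invariant_matrix m"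
  shows "mat_mult G (V_rep G x) m = mat_mult G m (V_rep G x)"
proof (intro ext)
  fix i j
  have "m (conjugate (inv g) i) j = m i (conjugate g j)"
    if "g \<in> carrier G" "i \<in> carrier G" "j \<in> carrier G" for g
    using that invariant_matrix_conjugate[OF assms, of g "conjugate (inv g) i" j] by simp
  moreover have "m i k = 0" "m k i = 0" if "i \<notin> carrier G" for i k
    using that invariant_matrix_support[OF assms] invols_subset by blast+
  ultimately show "mat_mult G (V_rep G x) m i j = mat_mult G m (V_rep G x) i j"
    by (simp add: mat_mult_V_rep_left_eq mat_mult_V_rep_right_eq)
qed

lemma conjugate_conjugate_conjugate:
  "c \<in> carrier G \<Longrightarrow> g \<in> carrier G \<Longrightarrow> i \<in> carrier G \<Longrightarrow>
    conjugate (conjugate c g) (conjugate c i) = conjugate c (conjugate g i)"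
  by (simp add: conjugate_def inv_mult_group m_assoc)

lemma invariant_matrix_V_rep_mult:
  assumes a: "class_function a" and b: "invariant_matrix b"
  shows "invariant_matrix (mat_mult G (V_rep G a) b)"
proof -
  have "i \<in> invols G \<and> j \<in> invols G" if nz: "mat_mult G (V_rep G a) b i j \<noteq> 0" for i j
  proof -
    have i: "i \<in> carrier G" using nz by (simp add: mat_mult_V_rep_left_eq split: if_splits)
    then obtain g where "g \<in> carrier G" "b (conjugate (inv g) i) j \<noteq> 0"
      using nz by (auto simp: mat_mult_V_rep_left_eq elim: sum.not_neutral_contains_not_neutral)
    then show ?thesis
      using invariant_matrix_support[OF b] conjugate_in_invols_iff[of "inv g" i] i by auto
  qed
  moreover have "mat_mult G (V_rep G a) b (conjugate c i) (conjugate c j) = mat_mult G (V_rep G a) b i j"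
    if c: "c \<in> carrier G" "i \<in> carrier G" "j \<in> carrier G" for c i j
  proof -
    have "mat_mult G (V_rep G a) b (conjugate c i) (conjugate c j) =
        (\<Sum>g\<in>carrier G. a (conjugate c g) *
          b (conjugate (inv (conjugate c g)) (conjugate c i)) (conjugate c j))"
      using c sum_reindex_conjugate[OF c(1),
          of "\<lambda>g. a g * b (conjugate (inv g) (conjugate c i)) (conjugate c j)"]
      by (simp add: mat_mult_V_rep_left_eq)
    also have "\<dots> = (\<Sum>g\<in>carrier G. a g * b (conjugate (inv g) i) j)"
    proof (intro sum.cong refl)
      fix g assume g: "g \<in> carrier G"
      have "conjugate (inv (conjugate c g)) (conjugate c i) = conjugate c (conjugate (inv g) i)"
        using c g by (simp add: conjugate_conjugate_conjugate flip: conjugate_inv)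
      then show "a (conjugate c g) * b (conjugate (inv (conjugate c g)) (conjugate c i)) (conjugate c j) =
          a g * b (conjugate (inv g) i) j"
        using a b c g invariant_matrix_conjugate unfolding class_function_def by simp
    qed
    also have "\<dots> = mat_mult G (V_rep G a) b i j" using c by (simp add: mat_mult_V_rep_left_eq)
    finally show ?thesis .
  qed
  ultimately show ?thesis unfolding invariant_matrix_def by blast
qed

end

section \<open>Adjoints\<close>

lemma sum_cnj_mult_self_eq_0_iff:
  fixes f :: "'a \<Rightarrow> complex"
  assumes "finite A"
  shows "(\<Sum>x\<in>A. cnj (f x) * f x) = 0 \<longleftrightarrow> (\<forall>x\<in>A. f x = 0)"
proof -
  have "cnj z * z = of_real ((cmod z)\<^sup>2)" for z
    by (simp only: complex_norm_square mult.commute)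
  then have "(\<Sum>x\<in>A. cnj (f x) * f x) = of_real (\<Sum>x\<in>A. (cmod (f x))\<^sup>2)"
    unfolding of_real_sum by presburger
  also have "\<dots> = 0 \<longleftrightarrow> (\<forall>x\<in>A. (cmod (f x))\<^sup>2 = 0)"
    using assms by (simp only: of_real_eq_0_iff sum_nonneg_eq_0_iff zero_le_power2)
  finally show ?thesis by simp
qed

definition mat_adjoint :: "'g grp_mat \<Rightarrow> 'g grp_mat" where
  "mat_adjoint m = (\<lambda>i j. cnj (m j i))"

lemma mat_adjoint_adjoint [simp]: "mat_adjoint (mat_adjoint m) = m"
  unfolding mat_adjoint_def by simp

lemma mat_adjoint_mult: "mat_adjoint (mat_mult G m n) = mat_mult G (mat_adjoint n) (mat_adjoint m)"
  unfolding mat_adjoint_def mat_mult_def by (intro ext) (simp add: mult.commute)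

lemma mat_adjoint_add: "mat_adjoint (mat_add m n) = mat_add (mat_adjoint m) (mat_adjoint n)"
  unfolding mat_adjoint_def mat_add_def by simp

context finite_group
begin

definition grp_adjoint :: "'g grp_elt \<Rightarrow> 'g grp_elt" where
  "grp_adjoint x = (\<lambda>g. if g \<in> carrier G then cnj (x (inv g)) else 0)"

lemma grp_adjoint_zero [simp]: "grp_adjoint (\<lambda>_. 0) = (\<lambda>_. 0)"
  unfolding grp_adjoint_def by (simp only: complex_cnj_zero if_cancel)

lemma class_function_grp_adjoint: "class_function x \<Longrightarrow> class_function (grp_adjoint x)"
  unfolding class_function_def grp_adjoint_def by (simp flip: conjugate_inv)

lemma grp_adjoint_adjoint: "class_function x \<Longrightarrow> grp_adjoint (grp_adjoint x) = x"
  unfolding grp_adjoint_def class_function_def by (intro ext) auto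

lemma invariant_matrix_adjoint: "invariant_matrix m \<Longrightarrow> invariant_matrix (mat_adjoint m)"
  unfolding invariant_matrix_def mat_adjoint_def by (metis complex_cnj_zero)

lemma grp_adjoint_mult: "grp_adjoint (grp_mult G x y) = grp_mult G (grp_adjoint y) (grp_adjoint x)"
proof (rule sym, rule grp_mult_eqI)
  fix h assume h: "h \<in> carrier G"
  have "(\<Sum>g\<in>carrier G. grp_adjoint y g * grp_adjoint x (inv g \<otimes> h)) =
      (\<Sum>g\<in>carrier G. cnj (y (inv g)) * cnj (x (inv h \<otimes> g)))"
    using h by (intro sum.cong) (simp_all add: grp_adjoint_def inv_mult_group)
  also have "\<dots> = cnj (\<Sum>g\<in>carrier G. x (inv h \<otimes> g) * y (inv (inv h \<otimes> g) \<otimes> inv h))"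
    using h by (simp add: inv_mult_group m_assoc mult.commute)
  also have "\<dots> = grp_adjoint (grp_mult G x y) h"
    using h sum_reindex_mult_left[of "inv h" "\<lambda>g. x g * y (inv g \<otimes> inv h)"]
    by (simp add: grp_adjoint_def grp_mult_apply)
  finally show "(\<Sum>g\<in>carrier G. grp_adjoint y g * grp_adjoint x (inv g \<otimes> h)) =
      grp_adjoint (grp_mult G x y) h" .
qed (simp add: grp_adjoint_def)

lemma mat_adjoint_V_rep: "mat_adjoint (V_rep G x) = V_rep G (grp_adjoint x)"
proof (intro ext)
  fix i j
  have "V_rep G (grp_adjoint x) i j =
      (\<Sum>g\<in>carrier G. grp_adjoint x (inv g) * V_grp G (inv g) i j)"
    unfolding V_rep_def by (rule sum_reindex_inv[symmetric])
  also have "\<dots> = (\<Sum>g\<in>carrier G. cnj (x g) * V_grp G g j i)"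
  proof (intro sum.cong refl)
    fix g assume g: "g \<in> carrier G"
    have "V_grp G (inv g) i j = V_grp G g j i"
      using g conjugate_eq_iff[OF g] by (auto simp: V_grp_eq)
    then show "grp_adjoint x (inv g) * V_grp G (inv g) i j = cnj (x g) * V_grp G g j i"
      using g by (simp add: grp_adjoint_def)
  qed
  also have "\<dots> = mat_adjoint (V_rep G x) i j"
    unfolding mat_adjoint_def V_rep_def by (simp add: V_grp_eq if_distrib cong: if_cong)
  finally show "mat_adjoint (V_rep G x) i j = V_rep G (grp_adjoint x) i j" ..
qed

lemma grp_adjoint_mult_self_eq_zero:
  assumes "class_function x" "grp_mult G (grp_adjoint x) x = (\<lambda>_. 0)"
  shows "x = (\<lambda>_. 0)"
proof -
  have "grp_mult G (grp_adjoint x) x \<one> = (\<Sum>g\<in>carrier G. cnj (x (inv g)) * x (inv g))"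
    by (simp add: grp_mult_apply grp_adjoint_def)
  also have "\<dots> = (\<Sum>g\<in>carrier G. cnj (x g) * x g)"
    by (rule sum_reindex_inv)
  finally have "\<forall>g\<in>carrier G. x g = 0"
    using assms(2) finite_carrier by (simp add: sum_cnj_mult_self_eq_0_iff)
  then show ?thesis using assms(1) unfolding class_function_def by (intro ext) metis
qed

lemma mat_adjoint_mult_self_eq_zero:
  assumes "invariant_matrix m" "mat_mult G (mat_adjoint m) m = (\<lambda>_ _. 0)"
  shows "m = (\<lambda>_ _. 0)"
proof (intro ext)
  fix k j
  have "(\<Sum>k\<in>carrier G. cnj (m k j) * m k j) = 0"
    using fun_cong[OF fun_cong[OF assms(2), of j], of j] unfolding mat_mult_def mat_adjoint_def .
  then show "m k j = 0"
    using finite_carrier invariant_matrix_support[OF assms(1), of k j] invols_subset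
    by (auto simp: sum_cnj_mult_self_eq_0_iff)
qed

end

section \<open>The algebra H\<close>

context finite_group
begin

lemma H_carrier_iff: "x \<in> H_carrier G \<longleftrightarrow> class_function (fst x) \<and> invariant_matrix (snd x)"
  unfolding H_carrier_def A_alg_eq_class_functions B_alg_eq_invariant_matrices by (cases x) auto

lemma H_mult_assoc: "H_mult G (H_mult G x y) w = H_mult G x (H_mult G y w)"
  unfolding H_mult_def
  by (simp add: grp_mult_assoc V_rep_grp_mult mat_mult_add_left mat_mult_add_right mat_mult_assoc)
     (simp add: mat_add_def add_ac)

lemma H_mult_add_left: "H_mult G (H_add x y) w = H_add (H_mult G x w) (H_mult G y w)"
  unfolding H_mult_def H_add_def
  by (simp add: grp_mult_add_left V_rep_add mat_mult_add_left mat_mult_add_right)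
     (simp add: mat_add_def add_ac)

lemma H_mult_add_right: "H_mult G x (H_add y w) = H_add (H_mult G x y) (H_mult G x w)"
  unfolding H_mult_def H_add_def
  by (simp add: grp_mult_add_right V_rep_add mat_mult_add_left mat_mult_add_right)
     (simp add: mat_add_def add_ac)

lemma H_mult_smul_left: "H_mult G (H_smul c x) y = H_smul c (H_mult G x y)"
  unfolding H_mult_def H_smul_def
  by (simp add: grp_mult_scale_left V_rep_scale mat_mult_scale_left mat_mult_scale_right)
     (simp add: mat_add_def algebra_simps)

lemma H_mult_smul_right: "H_mult G x (H_smul c y) = H_smul c (H_mult G x y)"
  unfolding H_mult_def H_smul_def
  by (simp add: grp_mult_scale_right V_rep_scale mat_mult_scale_left mat_mult_scale_right)
     (simp add: mat_add_def algebra_simps)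

lemma H_mult_closed: "x \<in> H_carrier G \<Longrightarrow> y \<in> H_carrier G \<Longrightarrow> H_mult G x y \<in> H_carrier G"
  unfolding H_carrier_iff H_mult_def
  by (simp add: class_function_grp_mult invariant_matrix_add invariant_matrix_mult
      invariant_matrix_V_rep_mult flip: V_rep_commute)

lemma H_smul_closed: "x \<in> H_carrier G \<Longrightarrow> H_smul c x \<in> H_carrier G"
  unfolding H_carrier_iff H_smul_def by (simp add: class_function_scale invariant_matrix_scale)

lemma H_add_closed: "x \<in> H_carrier G \<Longrightarrow> y \<in> H_carrier G \<Longrightarrow> H_add x y \<in> H_carrier G"
  unfolding H_carrier_iff H_add_def by (simp add: class_function_add invariant_matrix_add)

lemma H_zero_closed: "H_zero \<in> H_carrier G"
  unfolding H_carrier_iff H_zero_def by (simp add: class_function_zero invariant_matrix_zero)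

lemma H_is_assoc_algebra: "is_assoc_algebra (H_carrier G) H_zero H_add H_smul (H_mult G)"
proof -
  have "H_add x (H_smul (-1) x) = H_zero" for x :: "'g H_elt"
    unfolding H_add_def H_smul_def H_zero_def mat_add_def by simp
  then have "\<exists>y\<in>H_carrier G. H_add x y = H_zero" if "x \<in> H_carrier G" for x
    using that H_smul_closed by blast
  then show ?thesis
    unfolding is_assoc_algebra_def
    by (simp add: H_zero_closed H_add_closed H_smul_closed H_mult_closed H_mult_assoc
        H_mult_add_left H_mult_add_right H_mult_smul_left H_mult_smul_right)
       (simp add: H_zero_def H_add_def H_smul_def mat_add_def algebra_simps)
qed

definition H_adjoint :: "'g H_elt \<Rightarrow> 'g H_elt" where
  "H_adjoint x = (grp_adjoint (fst x), mat_adjoint (snd x))"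

lemma H_adjoint_mult: "H_adjoint (H_mult G x y) = H_mult G (H_adjoint y) (H_adjoint x)"
  unfolding H_adjoint_def H_mult_def
  by (simp add: grp_adjoint_mult mat_adjoint_add mat_adjoint_mult mat_adjoint_V_rep)
     (simp add: mat_add_def add_ac)

lemma H_adjoint_mult_self_eq_zero:
  assumes x: "x \<in> H_carrier G" and zero: "H_mult G (H_adjoint x) x = H_zero"
  shows "x = H_zero"
proof -
  obtain a b where ab: "x = (a, b)" "class_function a" "invariant_matrix b"
    using x H_carrier_iff by (cases x) auto
  have "grp_mult G (grp_adjoint a) a = (\<lambda>_. 0)"
    using zero ab unfolding H_mult_def H_adjoint_def H_zero_def by simp
  then have a: "a = (\<lambda>_. 0)" using grp_adjoint_mult_self_eq_zero ab by blast
  have "mat_mult G (mat_adjoint b) b = (\<lambda>_ _. 0)"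
    using zero ab a unfolding H_mult_def H_adjoint_def H_zero_def by simp
  then have "b = (\<lambda>_ _. 0)" using mat_adjoint_mult_self_eq_zero ab by blast
  then show ?thesis using ab a unfolding H_zero_def by simp
qed

lemma H_positive_involution: "positive_involution (H_carrier G) H_zero (H_mult G) H_adjoint"
proof
  fix x assume x: "x \<in> H_carrier G"
  then show "H_mult G x H_zero = H_zero"
    unfolding H_mult_def H_zero_def by simp
  show "H_adjoint x \<in> H_carrier G"
    using x unfolding H_carrier_iff H_adjoint_def
    by (simp add: class_function_grp_adjoint invariant_matrix_adjoint)
  show "H_adjoint (H_adjoint x) = x"
    using x unfolding H_carrier_iff H_adjoint_def by (simp add: grp_adjoint_adjoint)
  show "H_mult G (H_adjoint x) x = H_zero \<Longrightarrow> x = H_zero"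
    using x by (rule H_adjoint_mult_self_eq_zero)
qed (simp_all add: H_mult_closed H_mult_assoc H_adjoint_mult)

lemma A_central_subalgebra:
  "is_central_subalgebra (H_carrier G) H_zero H_add H_smul (H_mult G)
    {(a, (\<lambda>_ _. 0)) | a. a \<in> A_alg G}"
proof -
  have A: "{(a, (\<lambda>_ _. 0)) | a. a \<in> A_alg G} = {x. class_function (fst x) \<and> snd x = (\<lambda>_ _. 0)}"
    unfolding A_alg_eq_class_functions by force
  have "H_mult G x y = H_mult G y x"
    if "class_function (fst x)" "snd x = (\<lambda>_ _. 0)" "y \<in> H_carrier G" for x y
    using that class_function_commute V_rep_commute unfolding H_carrier_iff H_mult_def by simp
  then show ?thesis
    unfolding is_central_subalgebra_def is_subspace_def A
    by (auto simp: H_carrier_iff H_zero_def H_add_def H_smul_def H_mult_def invariant_matrix_zero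
        class_function_zero class_function_add class_function_scale class_function_grp_mult)
qed

lemma B_two_sided_ideal:
  "is_two_sided_ideal (H_carrier G) H_zero H_add H_smul (H_mult G)
    {((\<lambda>_. 0), b) | b. b \<in> B_alg G}"
proof -
  have B: "{((\<lambda>_. 0), b) | b. b \<in> B_alg G} = {x. fst x = (\<lambda>_. 0) \<and> invariant_matrix (snd x)}"
    unfolding B_alg_eq_invariant_matrices by force
  show ?thesis
    unfolding is_two_sided_ideal_def is_subspace_def B
    by (auto simp: H_carrier_iff H_zero_def H_add_def H_smul_def H_mult_def class_function_zero
        invariant_matrix_zero invariant_matrix_add invariant_matrix_scale invariant_matrix_mult
        invariant_matrix_V_rep_mult simp flip: V_rep_commute)
qed

end

theorem lemma2p8:
  fixes G :: "('g, 'm) monoid_scheme"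
  assumes "group G" and "finite (carrier G)"
  shows "is_semisimple_algebra (H_carrier G) H_zero H_add H_smul (H_mult G)
    \<and> is_central_subalgebra (H_carrier G) H_zero H_add H_smul (H_mult G)
        {(a, (\<lambda>_ _. 0)) | a. a \<in> A_alg G}
    \<and> is_two_sided_ideal (H_carrier G) H_zero H_add H_smul (H_mult G)
        {((\<lambda>_. 0), b) | b. b \<in> B_alg G}"
proof -
  interpret finite_group G
    using assms by (simp add: finite_group_def finite_group_axioms_def)
  show ?thesis
    using semisimple_if_positive_involution[OF H_is_assoc_algebra H_positive_involution]
      A_central_subalgebra B_two_sided_ideal by blast
qed

end
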